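(* Assume $\mathbf{P}$ is hierarchical, $K$ is a field, and $\tau_{(i)}\neq0$, $\eta_{(i)}\neq-1_K$ for all $i\in\Omega$. Let $D,C\in\mathcal{I}(\overline{\mathbf{P}})$. Then $\pi(\Omega,C)=\pi(\Omega,D)$ if and only if there exists a bijection $\varepsilon:C\to D$ with $\eta_{(i)}=\eta_{(\varepsilon(i))}$ for all $i\in C$.
   Context: $\Omega$ is a finite set and $\mathbf{P}=(\Omega,\preccurlyeq_{\mathbf{P}})$ a poset; $\overline{\mathbf{P}}$ is the dual poset and $\mathcal{I}(\overline{\mathbf{P}})$ its set of ideals (up-closed subsets of $\mathbf{P}$). For $Y\subseteq\Omega$: $\max(Y)$ is the set of maximal elements of $Y$ w.r.t. $\preccurlyeq_{\mathbf{P}}$; $\mathcal{I}(Y)$ is the set of down-closed subsets of $Y$. $\tau,\eta\in K^{\Omega}$. For $D,I\subseteq\Omega$, $\varphi(D,I)=(-1)^{|I\cap D|}\big(\prod_{i\in I-\max(I)}\tau_{(i)}\big)\big(\prod_{i\in\max(I)-D}\eta_{(i)}\big)$ if $I\cap D\subseteq\max(I)$, and $0$ otherwise; for $D\subseteq Y\subseteq\Omega$, $\pi(Y,D)=\sum_{I\in\mathcal{I}(Y)}\varphi(D,I)x^{|I|}\in K[x]$. $\mathrm{len}(y)$ is the largest cardinality of a chain in $\mathbf{P}$ with greatest element $y$; $\mathbf{P}$ is hierarchical if $\mathrm{len}(u)+1\leqslant\mathrm{len}(v)$ implies $u\preccurlyeq_{\mathbf{P}}v$. *)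

theory Defs
  imports "HOL-Computational_Algebra.Polynomial"
begin

definition finite_poset :: "'a set \<Rightarrow> ('a \<Rightarrow> 'a \<Rightarrow> bool) \<Rightarrow> bool" where
  "finite_poset \<Omega> le \<longleftrightarrow> finite \<Omega> \<and>
     (\<forall>x\<in>\<Omega>. le x x) \<and>
     (\<forall>x\<in>\<Omega>. \<forall>y\<in>\<Omega>. le x y \<and> le y x \<longrightarrow> x = y) \<and>
     (\<forall>x\<in>\<Omega>. \<forall>y\<in>\<Omega>. \<forall>z\<in>\<Omega>. le x y \<and> le y z \<longrightarrow> le x z)"

definition maxel :: "('a \<Rightarrow> 'a \<Rightarrow> bool) \<Rightarrow> 'a set \<Rightarrow> 'a set" where
  "maxel le Y = {y \<in> Y. \<forall>z\<in>Y. le y z \<longrightarrow> z = y}"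

definition down_sets :: "('a \<Rightarrow> 'a \<Rightarrow> bool) \<Rightarrow> 'a set \<Rightarrow> 'a set set" where
  "down_sets le Y = {I. I \<subseteq> Y \<and> (\<forall>i\<in>I. \<forall>j\<in>Y. le j i \<longrightarrow> j \<in> I)}"

(* I(dual P): ideals of the dual poset = up-closed subsets of Omega *)
definition dual_ideals :: "'a set \<Rightarrow> ('a \<Rightarrow> 'a \<Rightarrow> bool) \<Rightarrow> 'a set set" where
  "dual_ideals \<Omega> le = {I. I \<subseteq> \<Omega> \<and> (\<forall>i\<in>I. \<forall>j\<in>\<Omega>. le i j \<longrightarrow> j \<in> I)}"

definition phi :: "('a \<Rightarrow> 'a \<Rightarrow> bool) \<Rightarrow> ('a \<Rightarrow> 'k::field) \<Rightarrow> ('a \<Rightarrow> 'k)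
                   \<Rightarrow> 'a set \<Rightarrow> 'a set \<Rightarrow> 'k" where
  "phi le \<tau> \<eta> D I =
     (if I \<inter> D \<subseteq> maxel le I
      then (-1) ^ card (I \<inter> D) * (\<Prod>i\<in>I - maxel le I. \<tau> i) * (\<Prod>i\<in>maxel le I - D. \<eta> i)
      else 0)"

definition piP :: "('a \<Rightarrow> 'a \<Rightarrow> bool) \<Rightarrow> ('a \<Rightarrow> 'k::field) \<Rightarrow> ('a \<Rightarrow> 'k)
                   \<Rightarrow> 'a set \<Rightarrow> 'a set \<Rightarrow> 'k poly" where
  "piP le \<tau> \<eta> Y D = (\<Sum>I\<in>down_sets le Y. monom (phi le \<tau> \<eta> D I) (card I))"

definition is_chain :: "('a \<Rightarrow> 'a \<Rightarrow> bool) \<Rightarrow> 'a set \<Rightarrow> bool" where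
  "is_chain le c \<longleftrightarrow> (\<forall>x\<in>c. \<forall>y\<in>c. le x y \<or> le y x)"

definition len :: "'a set \<Rightarrow> ('a \<Rightarrow> 'a \<Rightarrow> bool) \<Rightarrow> 'a \<Rightarrow> nat" where
  "len \<Omega> le y = Max {card c | c. c \<subseteq> \<Omega> \<and> is_chain le c \<and> y \<in> c \<and> (\<forall>x\<in>c. le x y)}"

definition hierarchical :: "'a set \<Rightarrow> ('a \<Rightarrow> 'a \<Rightarrow> bool) \<Rightarrow> bool" where
  "hierarchical \<Omega> le \<longleftrightarrow> (\<forall>u\<in>\<Omega>. \<forall>v\<in>\<Omega>. len \<Omega> le u + 1 \<le> len \<Omega> le v \<longrightarrow> le u v)"

end

theory Submission
  imports Defs "HOL-Combinatorics.Permutations"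
begin

(*
  In a hierarchical poset u < v holds exactly when len u < len v, so the poset is an ordinal
  sum of antichains, its layers. A nonempty down-set is the union of all layers below some m
  with a nonempty subset S of layer m, and S is its set of maximal elements. Grouping the
  down-sets by m gives

    pi(Omega, D) = 1 + sum over m of [D meets no layer below m] *
                       x^|below m| * (prod of tau over below m) * (P_m(D) - 1),

  where P_m(D) is the product over i in layer m of (1 + w_i x), with w_i = -1 on D and
  w_i = eta_i off D. For an up-set D whose lowest layer is k the summands below k do not
  depend on D and those above k vanish.

  If an up-set E only meets layers above k, then pi(Omega, D) = pi(Omega, E) would make
  P_k(D) - P_k(E), a polynomial of degree at most |layer k|, divisible by x^(|layer k| + 1);
  but P_k(D) vanishes at 1 and P_k(E) does not, as eta is never -1. Hence equal polynomials
  have the same lowest layer k, and then they are equal iff P_k(D) = P_k(E), i.e. iff the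
  multisets of the w_i on layer k agree, i.e. iff eta takes the same multiset of values on
  the two intersections with layer k. Both sets contain all layers above k, so this says that
  eta takes the same multiset of values on D and on E, which is the required bijection.
*)

lemma proots_pCons_1:
  fixes c :: "'k::field"
  shows "proots [:1, c:] = (if c = 0 then {#} else {#- inverse c#})"
proof (cases "c = 0")
  case False
  then have "[:1, c:] = smult c [:inverse c, 1:]" by simp
  then show ?thesis
    using False by (simp only: proots_smult[OF False] proots_linear_factor if_False)
qed simp

lemma prod_mset_pCons_1_inj:
  fixes M N :: "'k::field multiset"
  assumes "size M = size N" and "(\<Prod>c\<in>#M. [:1, c:]) = (\<Prod>c\<in>#N. [:1, c:])"
  shows "M = N"
proof -
  \<comment> \<open>the roots give back the nonzero entries, the size then gives the number of zeros\<close>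
  have proots_prod: "proots (\<Prod>c\<in>#A. [:1, c:]) = image_mset (\<lambda>c. - inverse c) (filter_mset (\<lambda>c. c \<noteq> 0) A)"
    for A :: "'k multiset"
  proof (induction A)
    case (add c A)
    have "(\<Prod>c\<in>#A. [:1, c:]) \<noteq> 0" by (auto simp: prod_mset_zero_iff)
    then have "proots (\<Prod>c\<in>#add_mset c A. [:1, c:]) = proots [:1, c:] + proots (\<Prod>c\<in>#A. [:1, c:])"
      by (simp del: mult_pCons_left add: proots_mult)
    then show ?case using add.IH by (simp add: proots_pCons_1)
  qed simp
  have "inj (image_mset (\<lambda>c::'k. - inverse c))"
    by (rule multiset.inj_map) (rule injI, simp)
  then have nonzero: "filter_mset (\<lambda>c. c \<noteq> 0) M = filter_mset (\<lambda>c. c \<noteq> 0) N"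
    using assms(2) proots_prod[of M] proots_prod[of N] by (simp add: inj_eq)
  have size_eq: "size A = size (filter_mset (\<lambda>c. c \<noteq> 0) A) + count A 0" for A :: "'k multiset"
    by (induction A) auto
  show ?thesis
  proof (rule multiset_eqI)
    fix c
    show "count M c = count N c"
    proof (cases "c = 0")
      case True
      then show ?thesis using assms(1) size_eq[of M] size_eq[of N] nonzero by simp
    next
      case False
      then show ?thesis using arg_cong[OF nonzero, of "\<lambda>A. count A c"] by simp
    qed
  qed
qed

lemma card_eq_if_image_mset_mset_set_eq:
  assumes "image_mset f (mset_set A) = image_mset g (mset_set B)"
  shows "card A = card B"
  by (metis assms size_image_mset size_mset_set)

lemma image_mset_mset_set_eq_iff_bij_betw:
  assumes "finite A" and "finite B"
  shows "image_mset f (mset_set A) = image_mset g (mset_set B) \<longleftrightarrow>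
         (\<exists>e. bij_betw e A B \<and> (\<forall>i\<in>A. f i = g (e i)))"
proof
  assume eq: "image_mset f (mset_set A) = image_mset g (mset_set B)"
  then have "card A = card B"
    by (rule card_eq_if_image_mset_mset_set_eq)
  then obtain h where h: "bij_betw h A B"
    using assms finite_same_card_bij by blast
  then have "image_mset g (mset_set B) = image_mset g (image_mset h (mset_set A))"
    by (simp add: bij_betw_def image_mset_mset_set)
  also have "\<dots> = image_mset (g \<circ> h) (mset_set A)"
    by (simp add: multiset.map_comp)
  finally have "image_mset g (mset_set B) = image_mset (g \<circ> h) (mset_set A)" .
  then obtain p where p: "p permutes A" "\<forall>i\<in>A. f i = (g \<circ> h) (p i)"
    using image_mset_eq_implies_permutes[OF assms(1)] eq by metis
  have "bij_betw (h \<circ> p) A B"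
    using bij_betw_trans[OF permutes_imp_bij[OF p(1)] h] .
  then show "\<exists>e. bij_betw e A B \<and> (\<forall>i\<in>A. f i = g (e i))"
    using p(2) by auto
next
  assume "\<exists>e. bij_betw e A B \<and> (\<forall>i\<in>A. f i = g (e i))"
  then obtain e where e: "bij_betw e A B" "\<forall>i\<in>A. f i = g (e i)" by blast
  have "image_mset f (mset_set A) = image_mset g (image_mset e (mset_set A))"
    unfolding multiset.map_comp comp_def using e(2) assms(1) by (intro image_mset_cong) simp
  also have "\<dots> = image_mset g (mset_set B)"
    using e(1) by (simp add: bij_betw_def image_mset_mset_set)
  finally show "image_mset f (mset_set A) = image_mset g (mset_set B)" .
qed

lemma prod_pCons_1_eq_sum_monom:
  fixes w :: "'a \<Rightarrow> 'k::comm_ring_1"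
  assumes "finite A"
  shows "(\<Prod>i\<in>A. [:1, w i:]) = (\<Sum>S\<in>Pow A. monom (\<Prod>i\<in>S. w i) (card S))"
proof -
  have monom_prod: "(\<Prod>i\<in>S. monom (w i) 1) = monom (\<Prod>i\<in>S. w i) (card S)" if "finite S" for S
    using that by (induction S rule: finite_induct) (auto simp: mult_monom)
  have "(\<Prod>i\<in>A. [:1, w i:]) = (\<Prod>i\<in>A. monom (w i) 1 + 1)"
    by (simp add: monom_altdef one_pCons)
  also have "\<dots> = (\<Sum>S\<in>Pow A. (\<Prod>i\<in>S. monom (w i) 1) * (\<Prod>i\<in>A - S. 1))"
    by (rule prod_add[OF assms])
  also have "\<dots> = (\<Sum>S\<in>Pow A. monom (\<Prod>i\<in>S. w i) (card S))"
  proof (intro sum.cong refl)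
    fix S assume "S \<in> Pow A"
    then have "finite S" using assms finite_subset by blast
    then show "(\<Prod>i\<in>S. monom (w i) 1) * (\<Prod>i\<in>A - S. 1) = monom (\<Prod>i\<in>S. w i) (card S)"
      by (simp only: monom_prod prod.neutral_const mult_1_right)
  qed
  finally show ?thesis .
qed

lemma monom_dvd_imp_eq_0:
  fixes A :: "'k::field poly"
  assumes dvd: "monom 1 (N + n + 1) dvd monom c N * A" and "c \<noteq> 0" and "degree A \<le> n"
  shows "A = 0"
proof (rule ccontr)
  assume "A \<noteq> 0"
  have "monom c N = smult c (monom 1 N)"
    by (simp add: smult_monom)
  then have "monom c N * A = monom 1 N * smult c A"
    by (simp add: mult_smult_left mult_smult_right)
  moreover have "monom (1::'k) (N + n + 1) = monom 1 N * monom 1 (n + 1)"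
    by (simp add: mult_monom)
  ultimately have "monom 1 N * monom 1 (n + 1) dvd monom 1 N * smult c A"
    using dvd by metis
  then have "monom 1 (n + 1) dvd smult c A"
    by (metis dvd_times_left_cancel_iff monom_eq_0_iff one_neq_zero)
  then have "monom 1 (n + 1) dvd A"
    using \<open>c \<noteq> 0\<close> by (simp add: dvd_smult_iff)
  then have "n + 1 \<le> degree A"
    using dvd_imp_degree_le[OF _ \<open>A \<noteq> 0\<close>] by (fastforce simp: degree_monom_eq)
  then show False using assms(3) by simp
qed

lemma image_mset_override_eq_iff:
  assumes "finite L" and "\<forall>i\<in>L. f i \<noteq> a"
  shows "image_mset (\<lambda>i. if i \<in> X then a else f i) (mset_set L) =
           image_mset (\<lambda>i. if i \<in> Y then a else f i) (mset_set L) \<longleftrightarrow>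
         image_mset f (mset_set (L \<inter> X)) = image_mset f (mset_set (L \<inter> Y))"
proof -
  have part: "mset_set L = mset_set (L \<inter> Z) + mset_set (L - Z)" for Z
    using assms(1) mset_set_Union[of "L \<inter> Z" "L - Z"] by (simp add: Int_Diff_Un Int_Diff_disjoint)
  have split: "image_mset f (mset_set L) = image_mset f (mset_set (L \<inter> Z)) + image_mset f (mset_set (L - Z))"
    for Z by (subst part[of Z]) simp
  have override: "image_mset (\<lambda>i. if i \<in> Z then a else f i) (mset_set L) =
      replicate_mset (card (L \<inter> Z)) a + image_mset f (mset_set (L - Z))" for Z
  proof -
    have "image_mset (\<lambda>i. if i \<in> Z then a else f i) (mset_set (L \<inter> Z)) = image_mset (\<lambda>_. a) (mset_set (L \<inter> Z))"
      "image_mset (\<lambda>i. if i \<in> Z then a else f i) (mset_set (L - Z)) = image_mset f (mset_set (L - Z))"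
      using assms(1) by (auto intro!: image_mset_cong)
    then show ?thesis by (subst part[of Z]) (simp add: image_mset_const_eq)
  qed
  have outside: "filter_mset (\<lambda>v. v \<noteq> a) (image_mset (\<lambda>i. if i \<in> Z then a else f i) (mset_set L)) =
      image_mset f (mset_set (L - Z))" for Z
  proof -
    have "filter_mset (\<lambda>i. f i \<noteq> a) (mset_set (L - Z)) = mset_set (L - Z)"
      using assms by (auto intro: arg_cong[where f = mset_set])
    then show ?thesis by (simp add: override filter_mset_image_mset)
  qed
  show ?thesis
  proof
    assume "image_mset (\<lambda>i. if i \<in> X then a else f i) (mset_set L) =
            image_mset (\<lambda>i. if i \<in> Y then a else f i) (mset_set L)"
    then have "image_mset f (mset_set (L - X)) = image_mset f (mset_set (L - Y))"
      using outside by metis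
    then show "image_mset f (mset_set (L \<inter> X)) = image_mset f (mset_set (L \<inter> Y))"
      using split[of X] split[of Y] by simp
  next
    assume inside: "image_mset f (mset_set (L \<inter> X)) = image_mset f (mset_set (L \<inter> Y))"
    then have "card (L \<inter> X) = card (L \<inter> Y)"
      by (rule card_eq_if_image_mset_mset_set_eq)
    moreover have "image_mset f (mset_set (L - X)) = image_mset f (mset_set (L - Y))"
      using split[of X] split[of Y] inside by (metis add_left_cancel)
    ultimately show "image_mset (\<lambda>i. if i \<in> X then a else f i) (mset_set L) =
            image_mset (\<lambda>i. if i \<in> Y then a else f i) (mset_set L)"
      by (simp add: override)
  qed
qed

lemma min_value_cases:
  fixes f :: "'a \<Rightarrow> 'b::linorder"
  assumes "finite X" and "finite Y"
  obtains "X = {}" "Y = {}"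
  | k where "k \<in> f ` X" "\<forall>j\<in>X. k \<le> f j" "\<forall>j\<in>Y. k < f j"
  | k where "k \<in> f ` Y" "\<forall>j\<in>Y. k \<le> f j" "\<forall>j\<in>X. k < f j"
  | k where "k \<in> f ` X" "\<forall>j\<in>X. k \<le> f j" "k \<in> f ` Y" "\<forall>j\<in>Y. k \<le> f j"
proof -
  have min: "Min (f ` Z) \<in> f ` Z" "\<forall>j\<in>Z. Min (f ` Z) \<le> f j" if "finite Z" "Z \<noteq> {}" for Z
    using that by auto
  consider "X = {}" "Y = {}" | "X \<noteq> {}" "Y = {}" | "X = {}" "Y \<noteq> {}" | "X \<noteq> {}" "Y \<noteq> {}"
    by blast
  then show thesis
  proof cases
    case 1
    then show thesis using that(1) by blast
  next
    case 2
    then show thesis using that(2) min[OF assms(1)] by blast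
  next
    case 3
    then show thesis using that(3) min[OF assms(2)] by blast
  next
    case 4
    note X = min[OF assms(1) 4(1)] and Y = min[OF assms(2) 4(2)]
    show thesis
    proof (cases rule: linorder_cases[of "Min (f ` X)" "Min (f ` Y)"])
      case less
      then show thesis using that(2) X Y by (meson order.strict_trans2)
    next
      case equal
      then show thesis using that(4) X Y by metis
    next
      case greater
      then show thesis using that(3) X Y by (meson order.strict_trans2)
    qed
  qed
qed

locale leveled_poset =
  fixes Om :: "'a set" and le :: "'a \<Rightarrow> 'a \<Rightarrow> bool" and level :: "'a \<Rightarrow> nat"
  assumes finite_carrier: "finite Om"
    and le_iff_level: "\<And>u v. u \<in> Om \<Longrightarrow> v \<in> Om \<Longrightarrow> le u v \<longleftrightarrow> u = v \<or> level u < level v"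
begin

definition layer :: "nat \<Rightarrow> 'a set" where
  "layer m = {i \<in> Om. level i = m}"

definition below :: "nat \<Rightarrow> 'a set" where
  "below m = {i \<in> Om. level i < m}"

definition higher :: "nat \<Rightarrow> 'a set" where
  "higher m = {i \<in> Om. m < level i}"

definition layer_poly :: "('a \<Rightarrow> 'k::field) \<Rightarrow> 'a set \<Rightarrow> nat \<Rightarrow> 'k poly" where
  "layer_poly \<eta> D m = (\<Prod>i\<in>layer m. [:1, if i \<in> D then -1 else \<eta> i:])"

definition layer_term :: "('a \<Rightarrow> 'k::field) \<Rightarrow> ('a \<Rightarrow> 'k) \<Rightarrow> 'a set \<Rightarrow> nat \<Rightarrow> 'k poly" where
  "layer_term \<tau> \<eta> D m =
     (if D \<inter> below m = {}
      then monom (\<Prod>i\<in>below m. \<tau> i) (card (below m)) * (layer_poly \<eta> D m - 1)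
      else 0)"

lemma finite_layer [simp]: "finite (layer m)"
  and finite_below [simp]: "finite (below m)"
  and finite_higher [simp]: "finite (higher m)"
  using finite_carrier by (simp_all add: layer_def below_def higher_def)

lemma layer_below_disjoint: "layer m \<inter> below m = {}"
  by (auto simp: layer_def below_def)

lemma nonempty_down_sets_eq:
  "down_sets le Om - {{}} = (\<lambda>(m, S). below m \<union> S) ` (SIGMA m:level ` Om. Pow (layer m) - {{}})"
proof (intro equalityI subsetI)
  fix I assume I: "I \<in> down_sets le Om - {{}}"
  then have "I \<subseteq> Om" "I \<noteq> {}" and down: "\<And>i j. i \<in> I \<Longrightarrow> j \<in> Om \<Longrightarrow> le j i \<Longrightarrow> j \<in> I"
    by (auto simp: down_sets_def)
  moreover have "finite I"
    using \<open>I \<subseteq> Om\<close> finite_carrier finite_subset by blast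
  define m where "m = Max (level ` I)"
  have "m \<in> level ` I"
    unfolding m_def using \<open>finite I\<close> \<open>I \<noteq> {}\<close> by simp
  then obtain i where i: "i \<in> I" "level i = m"
    by blast
  have "level j \<le> m" if "j \<in> I" for j
    using that \<open>finite I\<close> unfolding m_def by simp
  then have "I = below m \<union> (I \<inter> layer m)"
    using \<open>I \<subseteq> Om\<close> i down[of i] le_iff_level[of _ i]
    by (auto simp: below_def layer_def le_less)
  moreover have "m \<in> level ` Om" "I \<inter> layer m \<noteq> {}"
    using i \<open>I \<subseteq> Om\<close> by (auto simp: layer_def)
  ultimately show "I \<in> (\<lambda>(m, S). below m \<union> S) ` (SIGMA m:level ` Om. Pow (layer m) - {{}})"
    by (intro image_eqI[where x = "(m, I \<inter> layer m)"]) auto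
next
  fix I assume "I \<in> (\<lambda>(m, S). below m \<union> S) ` (SIGMA m:level ` Om. Pow (layer m) - {{}})"
  then obtain m S where I: "I = below m \<union> S" and S: "S \<subseteq> layer m" "S \<noteq> {}"
    by auto
  have "j \<in> I" if "i \<in> I" "j \<in> Om" "le j i" for i j
    using that I S le_iff_level[of j i] by (auto simp: below_def layer_def)
  then show "I \<in> down_sets le Om - {{}}"
    using I S by (auto simp: down_sets_def below_def layer_def)
qed

lemma inj_on_below_Un: "inj_on (\<lambda>(m, S). below m \<union> S) (SIGMA m:level ` Om. Pow (layer m) - {{}})"
proof (rule inj_onI)
  fix p p'
  assume p: "p \<in> (SIGMA m:level ` Om. Pow (layer m) - {{}})" and p': "p' \<in> (SIGMA m:level ` Om. Pow (layer m) - {{}})"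
    and eq_p: "(\<lambda>(m, S). below m \<union> S) p = (\<lambda>(m, S). below m \<union> S) p'"
  obtain m S m' S' where pairs: "p = (m, S)" "p' = (m', S')"
    by fastforce
  then have S: "S \<subseteq> layer m" "S \<noteq> {}" and S': "S' \<subseteq> layer m'" "S' \<noteq> {}"
    and eq: "below m \<union> S = below m' \<union> S'"
    using p p' eq_p by auto
  have level_le: "m \<le> m'"
    if hyps: "S \<subseteq> layer m" "S \<noteq> {}" "S' \<subseteq> layer m'" "below m \<union> S = below m' \<union> S'"
    for m m' S S'
  proof -
    obtain s where "s \<in> S"
      using hyps by auto
    then have "level s = m" "s \<in> below m' \<union> S'"
      using hyps by (auto simp: layer_def)
    then show ?thesis
      using hyps(3) by (auto simp: below_def layer_def)
  qed
  have "m = m'"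
    using level_le[OF S S'(1) eq] level_le[OF S' S(1) eq[symmetric]] by simp
  moreover have "S = (below m \<union> S) \<inter> layer m" "S' = (below m' \<union> S') \<inter> layer m'"
    using S S' layer_below_disjoint by auto
  ultimately show "p = p'"
    using eq pairs by metis
qed

lemma maxel_below_Un:
  assumes "S \<subseteq> layer m" and "S \<noteq> {}"
  shows "maxel le (below m \<union> S) = S"
proof (intro equalityI subsetI)
  fix y assume y: "y \<in> maxel le (below m \<union> S)"
  obtain s where s: "s \<in> S"
    using assms by auto
  show "y \<in> S"
  proof (rule ccontr)
    assume "y \<notin> S"
    then have "y \<in> below m"
      using y by (auto simp: maxel_def)
    then have "le y s" "s \<noteq> y"
      using s assms le_iff_level[of y s] by (auto simp: below_def layer_def)
    then show False
      using y s by (auto simp: maxel_def)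
  qed
next
  fix y assume y: "y \<in> S"
  have "z = y" if "z \<in> below m \<union> S" "le y z" for z
  proof (rule ccontr)
    assume "z \<noteq> y"
    have "y \<in> Om" "level y = m" "z \<in> Om" "level z \<le> m"
      using that(1) y assms(1) by (auto simp: below_def layer_def)
    then show False
      using le_iff_level[of y z] that(2) \<open>z \<noteq> y\<close> by simp
  qed
  then show "y \<in> maxel le (below m \<union> S)"
    using y by (auto simp: maxel_def)
qed

lemma phi_below_Un:
  assumes S: "S \<subseteq> layer m" "S \<noteq> {}"
  shows "phi le \<tau> \<eta> D (below m \<union> S) =
    (if D \<inter> below m = {} then (\<Prod>i\<in>below m. \<tau> i) * (\<Prod>i\<in>S. if i \<in> D then -1 else \<eta> i) else 0)"
proof -
  have max: "maxel le (below m \<union> S) = S"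
    by (rule maxel_below_Un[OF S])
  have rest: "below m \<union> S - S = below m"
    using S layer_below_disjoint by auto
  have "finite S"
    using S(1) by (rule finite_subset) simp
  show ?thesis
  proof (cases "D \<inter> below m = {}")
    case True
    then have "(below m \<union> S) \<inter> D = S \<inter> D"
      by auto
    moreover have "(\<Prod>i\<in>S. if i \<in> D then -1 else \<eta> i) = (-1) ^ card (S \<inter> D) * (\<Prod>i\<in>S - D. \<eta> i)"
      using \<open>finite S\<close> by (simp add: prod.If_cases Int_commute Diff_eq)
    ultimately show ?thesis
      using True max rest by (simp add: phi_def)
  next
    case False
    then have "\<not> (below m \<union> S) \<inter> D \<subseteq> S"
      using S layer_below_disjoint by blast
    then show ?thesis
      using False max by (simp add: phi_def)
  qed
qed

lemma sum_phi_below_Un: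
  "(\<Sum>S\<in>Pow (layer m) - {{}}. monom (phi le \<tau> \<eta> D (below m \<union> S)) (card (below m \<union> S))) =
    layer_term \<tau> \<eta> D m"
proof -
  let ?T = "monom (\<Prod>i\<in>below m. \<tau> i) (card (below m))"
  let ?g = "\<lambda>S. monom (\<Prod>i\<in>S. if i \<in> D then -1 else \<eta> i) (card S)"
  have summand: "monom (phi le \<tau> \<eta> D (below m \<union> S)) (card (below m \<union> S)) =
      (if D \<inter> below m = {} then ?T * ?g S else 0)"
    if "S \<in> Pow (layer m) - {{}}" for S
  proof -
    have "card (below m \<union> S) = card (below m) + card S"
      using that layer_below_disjoint by (subst card_Un_disjoint) (auto intro: finite_subset)
    then show ?thesis
      using phi_below_Un[of S m \<tau> \<eta> D] that by (simp add: mult_monom)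
  qed
  have "layer_poly \<eta> D m = ?g {} + (\<Sum>S\<in>Pow (layer m) - {{}}. ?g S)"
    unfolding layer_poly_def prod_pCons_1_eq_sum_monom[OF finite_layer]
    by (rule sum.remove) auto
  then have "layer_poly \<eta> D m - 1 = (\<Sum>S\<in>Pow (layer m) - {{}}. ?g S)"
    by simp
  moreover have "(\<Sum>S\<in>Pow (layer m) - {{}}. monom (phi le \<tau> \<eta> D (below m \<union> S)) (card (below m \<union> S))) =
      (\<Sum>S\<in>Pow (layer m) - {{}}. if D \<inter> below m = {} then ?T * ?g S else 0)"
    by (rule sum.cong[OF refl summand])
  ultimately show ?thesis
    by (simp add: layer_term_def sum_distrib_left)
qed

lemma piP_eq_layer_sum: "piP le \<tau> \<eta> Om D = 1 + (\<Sum>m\<in>level ` Om. layer_term \<tau> \<eta> D m)"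
proof -
  let ?f = "\<lambda>I. monom (phi le \<tau> \<eta> D I) (card I)"
  have "finite (down_sets le Om)"
    using finite_carrier by (auto simp: down_sets_def intro: finite_subset[of _ "Pow Om"])
  moreover have "{} \<in> down_sets le Om"
    by (simp add: down_sets_def)
  ultimately have "piP le \<tau> \<eta> Om D = ?f {} + (\<Sum>I\<in>down_sets le Om - {{}}. ?f I)"
    unfolding piP_def by (rule sum.remove)
  also have "?f {} = 1"
    by (simp add: phi_def maxel_def)
  also have "(\<Sum>I\<in>down_sets le Om - {{}}. ?f I) =
      (\<Sum>m\<in>level ` Om. \<Sum>S\<in>Pow (layer m) - {{}}. ?f (below m \<union> S))"
    unfolding nonempty_down_sets_eq sum.reindex[OF inj_on_below_Un]
    by (subst sum.Sigma) (auto simp: split_def finite_carrier)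
  finally show ?thesis
    by (simp only: sum_phi_below_Un)
qed

lemma prod_below_neq_0:
  fixes \<tau> :: "'a \<Rightarrow> 'k::field"
  assumes "\<forall>i\<in>Om. \<tau> i \<noteq> 0"
  shows "(\<Prod>i\<in>below k. \<tau> i) \<noteq> 0"
  using assms by (subst prod_zero_iff[OF finite_below]) (auto simp: below_def)

lemma layer_term_eq_0_above:
  assumes "c \<in> D" "c \<in> Om" "level c < m"
  shows "layer_term \<tau> \<eta> D m = 0"
  using assms by (auto simp: layer_term_def below_def)

lemma layer_term_eq_if_levels_above:
  assumes "\<forall>j\<in>D. m < level j" and "\<forall>j\<in>E. m < level j"
  shows "layer_term \<tau> \<eta> D m = layer_term \<tau> \<eta> E m"
proof -
  have "layer_poly \<eta> D m = layer_poly \<eta> E m"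
    unfolding layer_poly_def using assms by (intro prod.cong refl) (auto simp: layer_def)
  moreover have "D \<inter> below m = {}" "E \<inter> below m = {}"
    using assms by (auto simp: below_def)
  ultimately show ?thesis
    by (simp add: layer_term_def)
qed

lemma sum_levels_from:
  assumes "k \<in> level ` Om"
  shows "(\<Sum>m\<in>{m \<in> level ` Om. k \<le> m}. f m) = f k + (\<Sum>m\<in>{m \<in> level ` Om. k < m}. f m)"
proof -
  have "{m \<in> level ` Om. k \<le> m} = insert k {m \<in> level ` Om. k < m}"
    using assms by auto
  then show ?thesis
    using finite_carrier by simp
qed

lemma piP_eq_iff_upper_sums_eq:
  assumes "\<forall>j\<in>D. k \<le> level j" and "\<forall>j\<in>E. k \<le> level j"
  shows "piP le \<tau> \<eta> Om D = piP le \<tau> \<eta> Om E \<longleftrightarrow>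
    (\<Sum>m\<in>{m \<in> level ` Om. k \<le> m}. layer_term \<tau> \<eta> D m) =
    (\<Sum>m\<in>{m \<in> level ` Om. k \<le> m}. layer_term \<tau> \<eta> E m)"
proof -
  have split: "(\<Sum>m\<in>level ` Om. f m) =
      (\<Sum>m\<in>{m \<in> level ` Om. m < k}. f m) + (\<Sum>m\<in>{m \<in> level ` Om. k \<le> m}. f m)"
    for f :: "nat \<Rightarrow> 'c::comm_monoid_add"
    using finite_carrier by (subst sum.union_disjoint[symmetric]) (auto intro: sum.cong)
  have "(\<Sum>m\<in>{m \<in> level ` Om. m < k}. layer_term \<tau> \<eta> D m) =
      (\<Sum>m\<in>{m \<in> level ` Om. m < k}. layer_term \<tau> \<eta> E m)"
    using assms by (intro sum.cong refl layer_term_eq_if_levels_above) auto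
  then show ?thesis
    unfolding piP_eq_layer_sum split[of "layer_term \<tau> \<eta> D"] split[of "layer_term \<tau> \<eta> E"] by simp
qed

lemma upper_sum_eq_layer_term:
  assumes "c \<in> D" "c \<in> Om" "level c = k"
  shows "(\<Sum>m\<in>{m \<in> level ` Om. k \<le> m}. layer_term \<tau> \<eta> D m) = layer_term \<tau> \<eta> D k"
proof -
  have "(\<Sum>m\<in>{m \<in> level ` Om. k < m}. layer_term \<tau> \<eta> D m) = 0"
    using assms layer_term_eq_0_above[OF assms(1,2)] by (intro sum.neutral) auto
  then show ?thesis
    using assms sum_levels_from[of k "layer_term \<tau> \<eta> D"] by auto
qed

lemma monom_dvd_layer_term:
  fixes \<tau> \<eta> :: "'a \<Rightarrow> 'k::field"
  assumes "k < m"
  shows "monom 1 (card (below k) + card (layer k) + 1) dvd layer_term \<tau> \<eta> D m"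
proof (cases "D \<inter> below m = {}")
  case True
  have "below k \<union> layer k \<subseteq> below m"
    using assms by (auto simp: below_def layer_def)
  then have "card (below k) + card (layer k) \<le> card (below m)"
    using card_mono[of "below m" "below k \<union> layer k"] layer_below_disjoint
    by (simp add: card_Un_disjoint Int_commute)
  then have "monom 1 (card (below k) + card (layer k)) dvd monom (\<Prod>i\<in>below m. \<tau> i) (card (below m))"
    by (metis le_Suc_ex mult_monom mult_1 dvd_triv_left)
  moreover have "monom 1 1 dvd layer_poly \<eta> D m - 1"
  proof -
    have "poly (layer_poly \<eta> D m - 1) 0 = 0"
      by (simp add: layer_poly_def poly_prod)
    then show ?thesis
      by (simp add: dvd_iff_poly_eq_0 monom_Suc monom_0)
  qed
  ultimately have "monom 1 (card (below k) + card (layer k)) * monom 1 1 dvd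
      monom (\<Prod>i\<in>below m. \<tau> i) (card (below m)) * (layer_poly \<eta> D m - 1)"
    by (intro mult_dvd_mono)
  then show ?thesis
    using True by (simp add: layer_term_def mult_monom)
qed (simp add: layer_term_def)

lemma degree_layer_poly_le: "degree (layer_poly \<eta> D m) \<le> card (layer m)"
proof -
  have "degree (layer_poly \<eta> D m) \<le> (\<Sum>i\<in>layer m. 1)"
    unfolding layer_poly_def
    by (rule order.trans[OF degree_prod_sum_le[OF finite_layer]], rule sum_mono) simp
  then show ?thesis
    by simp
qed

lemma poly_layer_poly_1_eq_0_iff:
  assumes "\<forall>i\<in>Om. \<eta> i \<noteq> -1"
  shows "poly (layer_poly \<eta> D m) 1 = 0 \<longleftrightarrow> D \<inter> layer m \<noteq> {}"
proof -
  have "poly (layer_poly \<eta> D m) 1 = (\<Prod>i\<in>layer m. 1 + (if i \<in> D then -1 else \<eta> i))"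
    by (simp add: layer_poly_def poly_prod)
  moreover have "1 + (if i \<in> D then -1 else \<eta> i) = 0 \<longleftrightarrow> i \<in> D" if "i \<in> layer m" for i
    using assms that by (auto simp: add_eq_0_iff layer_def)
  ultimately show ?thesis
    by auto
qed

lemma piP_neq_if_min_level_less:
  fixes \<tau> \<eta> :: "'a \<Rightarrow> 'k::field"
  assumes \<tau>: "\<forall>i\<in>Om. \<tau> i \<noteq> 0" and \<eta>: "\<forall>i\<in>Om. \<eta> i \<noteq> -1"
    and c: "c \<in> D" "c \<in> Om" "level c = k" and D: "\<forall>j\<in>D. k \<le> level j"
    and E: "\<forall>j\<in>E. k < level j"
  shows "piP le \<tau> \<eta> Om D \<noteq> piP le \<tau> \<eta> Om E"
proof
  assume "piP le \<tau> \<eta> Om D = piP le \<tau> \<eta> Om E"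
  then have "(\<Sum>m\<in>{m \<in> level ` Om. k \<le> m}. layer_term \<tau> \<eta> D m) =
      (\<Sum>m\<in>{m \<in> level ` Om. k \<le> m}. layer_term \<tau> \<eta> E m)"
    using piP_eq_iff_upper_sums_eq[of D k E \<tau> \<eta>] D E by (simp add: less_imp_le)
  moreover have "k \<in> level ` Om"
    using c by blast
  ultimately have "layer_term \<tau> \<eta> D k = layer_term \<tau> \<eta> E k + (\<Sum>m\<in>{m \<in> level ` Om. k < m}. layer_term \<tau> \<eta> E m)"
    using upper_sum_eq_layer_term[OF c, of \<tau> \<eta>] sum_levels_from[of k "layer_term \<tau> \<eta> E"] by simp
  moreover have "D \<inter> below k = {}" "E \<inter> below k = {}"
    using D E by (auto simp: below_def)
  ultimately have diff: "monom (\<Prod>i\<in>below k. \<tau> i) (card (below k)) * (layer_poly \<eta> D k - layer_poly \<eta> E k) =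
      (\<Sum>m\<in>{m \<in> level ` Om. k < m}. layer_term \<tau> \<eta> E m)"
    by (simp add: layer_term_def algebra_simps)
  have "monom 1 (card (below k) + card (layer k) + 1) dvd (\<Sum>m\<in>{m \<in> level ` Om. k < m}. layer_term \<tau> \<eta> E m)"
    by (intro dvd_sum monom_dvd_layer_term) simp
  moreover have "degree (layer_poly \<eta> D k - layer_poly \<eta> E k) \<le> card (layer k)"
    by (intro degree_diff_le degree_layer_poly_le)
  ultimately have "layer_poly \<eta> D k - layer_poly \<eta> E k = 0"
    unfolding diff[symmetric] by (rule monom_dvd_imp_eq_0[OF _ prod_below_neq_0[OF \<tau>]])
  moreover have "poly (layer_poly \<eta> D k) 1 = 0" "poly (layer_poly \<eta> E k) 1 \<noteq> 0"
    using c E poly_layer_poly_1_eq_0_iff[OF \<eta>] by (auto simp: layer_def)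
  ultimately show False
    by simp
qed

lemma piP_eq_iff_layer_poly_eq:
  fixes \<tau> \<eta> :: "'a \<Rightarrow> 'k::field"
  assumes \<tau>: "\<forall>i\<in>Om. \<tau> i \<noteq> 0"
    and c: "c \<in> D" "c \<in> Om" "level c = k" and D: "\<forall>j\<in>D. k \<le> level j"
    and d: "d \<in> E" "d \<in> Om" "level d = k" and E: "\<forall>j\<in>E. k \<le> level j"
  shows "piP le \<tau> \<eta> Om D = piP le \<tau> \<eta> Om E \<longleftrightarrow> layer_poly \<eta> D k = layer_poly \<eta> E k"
proof -
  have "piP le \<tau> \<eta> Om D = piP le \<tau> \<eta> Om E \<longleftrightarrow> layer_term \<tau> \<eta> D k = layer_term \<tau> \<eta> E k"
    using piP_eq_iff_upper_sums_eq[OF D E, of \<tau> \<eta>] upper_sum_eq_layer_term[OF c, of \<tau> \<eta>]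
      upper_sum_eq_layer_term[OF d, of \<tau> \<eta>]
    by simp
  moreover have "D \<inter> below k = {}" "E \<inter> below k = {}"
    using D E by (auto simp: below_def)
  ultimately show ?thesis
    using prod_below_neq_0[OF \<tau>] by (simp add: layer_term_def)
qed

lemma layer_poly_eq_iff:
  fixes \<eta> :: "'a \<Rightarrow> 'k::field"
  assumes "\<forall>i\<in>Om. \<eta> i \<noteq> -1"
  shows "layer_poly \<eta> D k = layer_poly \<eta> E k \<longleftrightarrow>
    image_mset \<eta> (mset_set (layer k \<inter> D)) = image_mset \<eta> (mset_set (layer k \<inter> E))"
proof -
  define W where "W X = image_mset (\<lambda>i. if i \<in> X then -1 else \<eta> i) (mset_set (layer k))" for X
  have "layer_poly \<eta> X k = (\<Prod>c\<in>#W X. [:1, c:])" for X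
    unfolding layer_poly_def W_def prod_unfold_prod_mset by (simp add: multiset.map_comp comp_def)
  moreover have "size (W D) = size (W E)"
    by (simp add: W_def)
  ultimately have "layer_poly \<eta> D k = layer_poly \<eta> E k \<longleftrightarrow> W D = W E"
    using prod_mset_pCons_1_inj by metis
  also have "\<dots> \<longleftrightarrow> image_mset \<eta> (mset_set (layer k \<inter> D)) = image_mset \<eta> (mset_set (layer k \<inter> E))"
    unfolding W_def
    by (rule image_mset_override_eq_iff[OF finite_layer]) (use assms in \<open>auto simp: layer_def\<close>)
  finally show ?thesis .
qed

lemma image_mset_dual_ideal_split:
  assumes "D \<in> dual_ideals Om le" and "c \<in> D" "level c = k" and "\<forall>j\<in>D. k \<le> level j"
  shows "image_mset \<eta> (mset_set D) = image_mset \<eta> (mset_set (layer k \<inter> D)) + image_mset \<eta> (mset_set (higher k))"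
proof -
  have "D \<subseteq> Om" "c \<in> Om" and up: "\<And>j. j \<in> Om \<Longrightarrow> le c j \<Longrightarrow> j \<in> D"
    using assms by (auto simp: dual_ideals_def)
  then have "D = (layer k \<inter> D) \<union> higher k"
    using assms(3,4) le_iff_level[of c] by (force simp: layer_def higher_def le_less)
  moreover have "(layer k \<inter> D) \<inter> higher k = {}"
    by (auto simp: layer_def higher_def)
  ultimately show ?thesis
    by (metis finite_Int finite_higher finite_layer image_mset_union mset_set_Union)
qed

lemma image_mset_neq_if_min_level_less:
  assumes "D \<in> dual_ideals Om le" and "E \<subseteq> Om"
    and "c \<in> D" "level c = k" and "\<forall>j\<in>E. k < level j"
  shows "image_mset \<eta> (mset_set D) \<noteq> image_mset \<eta> (mset_set E)"
proof -
  have "j \<in> D" if "j \<in> E" for j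
  proof -
    have "c \<in> Om" "j \<in> Om" "level c < level j"
      using assms that by (auto simp: dual_ideals_def)
    then show ?thesis
      using assms(1,3) le_iff_level[of c j] by (auto simp: dual_ideals_def)
  qed
  then have "E \<subseteq> D - {c}"
    using assms(3-5) by auto
  moreover have "finite D"
    using assms(1) finite_carrier by (auto simp: dual_ideals_def intro: finite_subset)
  ultimately have "card E < card D"
    using assms(3) by (meson card_Diff1_less card_mono finite_Diff order_le_less_trans)
  then show ?thesis
    using card_eq_if_image_mset_mset_set_eq by (metis less_irrefl)
qed

theorem piP_eq_iff_image_mset_eq:
  fixes \<tau> \<eta> :: "'a \<Rightarrow> 'k::field"
  assumes \<tau>: "\<forall>i\<in>Om. \<tau> i \<noteq> 0" and \<eta>: "\<forall>i\<in>Om. \<eta> i \<noteq> -1"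
    and D: "D \<in> dual_ideals Om le" and E: "E \<in> dual_ideals Om le"
  shows "piP le \<tau> \<eta> Om D = piP le \<tau> \<eta> Om E \<longleftrightarrow> image_mset \<eta> (mset_set D) = image_mset \<eta> (mset_set E)"
proof -
  have "D \<subseteq> Om" "E \<subseteq> Om"
    using D E by (auto simp: dual_ideals_def)
  then have "finite D" "finite E"
    using finite_carrier finite_subset by auto
  then show ?thesis
  proof (cases rule: min_value_cases[where f = level])
    case 1
    then show ?thesis
      by simp
  next
    case (2 k)
    then obtain c where c: "c \<in> D" "level c = k"
      by (metis imageE)
    have "piP le \<tau> \<eta> Om D \<noteq> piP le \<tau> \<eta> Om E"
      using \<open>D \<subseteq> Om\<close> c 2 by (intro piP_neq_if_min_level_less[OF \<tau> \<eta>]) auto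
    moreover have "image_mset \<eta> (mset_set D) \<noteq> image_mset \<eta> (mset_set E)"
      using \<open>E \<subseteq> Om\<close> c 2 by (intro image_mset_neq_if_min_level_less[OF D]) auto
    ultimately show ?thesis
      by simp
  next
    case (3 k)
    then obtain d where d: "d \<in> E" "level d = k"
      by (metis imageE)
    have "piP le \<tau> \<eta> Om E \<noteq> piP le \<tau> \<eta> Om D"
      using \<open>E \<subseteq> Om\<close> d 3 by (intro piP_neq_if_min_level_less[OF \<tau> \<eta>]) auto
    moreover have "image_mset \<eta> (mset_set E) \<noteq> image_mset \<eta> (mset_set D)"
      using \<open>D \<subseteq> Om\<close> d 3 by (intro image_mset_neq_if_min_level_less[OF E]) auto
    ultimately show ?thesis
      by auto
  next
    case (4 k)
    then obtain c d where c: "c \<in> D" "level c = k" and d: "d \<in> E" "level d = k"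
      by (metis imageE)
    have "piP le \<tau> \<eta> Om D = piP le \<tau> \<eta> Om E \<longleftrightarrow> layer_poly \<eta> D k = layer_poly \<eta> E k"
      by (rule piP_eq_iff_layer_poly_eq[OF \<tau> c(1) _ c(2) _ d(1) _ d(2)])
        (use 4 c d \<open>D \<subseteq> Om\<close> \<open>E \<subseteq> Om\<close> in auto)
    also have "\<dots> \<longleftrightarrow> image_mset \<eta> (mset_set (layer k \<inter> D)) = image_mset \<eta> (mset_set (layer k \<inter> E))"
      by (rule layer_poly_eq_iff[OF \<eta>])
    also have "\<dots> \<longleftrightarrow> image_mset \<eta> (mset_set D) = image_mset \<eta> (mset_set E)"
      using image_mset_dual_ideal_split[OF D c, of \<eta>] image_mset_dual_ideal_split[OF E d, of \<eta>] 4 by simp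
    finally show ?thesis .
  qed
qed

end

lemma finite_chain_cards:
  assumes "finite \<Omega>"
  shows "finite {card c | c. c \<subseteq> \<Omega> \<and> is_chain le c \<and> u \<in> c \<and> (\<forall>x\<in>c. le x u)}"
  by (rule finite_subset[of _ "card ` Pow \<Omega>"]) (use assms in auto)

lemma len_mem:
  assumes P: "finite_poset \<Omega> le" and u: "u \<in> \<Omega>"
  shows "len \<Omega> le u \<in> {card c | c. c \<subseteq> \<Omega> \<and> is_chain le c \<and> u \<in> c \<and> (\<forall>x\<in>c. le x u)}"
proof -
  have "finite \<Omega>" "le u u"
    using P u by (simp_all add: finite_poset_def)
  then have "card {u} \<in> {card c | c. c \<subseteq> \<Omega> \<and> is_chain le c \<and> u \<in> c \<and> (\<forall>x\<in>c. le x u)}"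
    using u by (auto simp: is_chain_def intro!: exI[of _ "{u}"])
  then show ?thesis
    unfolding len_def using finite_chain_cards[OF \<open>finite \<Omega>\<close>] by (intro Max_in) auto
qed

lemma len_strict_mono:
  assumes P: "finite_poset \<Omega> le" and u: "u \<in> \<Omega>" and v: "v \<in> \<Omega>" and "le u v" "u \<noteq> v"
  shows "len \<Omega> le u < len \<Omega> le v"
proof -
  have "finite \<Omega>" and refl: "le v v"
    and antisym: "le v u \<Longrightarrow> v = u"
    and trans: "\<And>x. x \<in> \<Omega> \<Longrightarrow> le x u \<Longrightarrow> le x v"
    using P u v \<open>le u v\<close> unfolding finite_poset_def by blast+
  obtain c where c: "len \<Omega> le u = card c" "c \<subseteq> \<Omega>" "is_chain le c" "u \<in> c" "\<forall>x\<in>c. le x u"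
    using len_mem[OF P u] by blast
  have "finite c"
    using c(2) \<open>finite \<Omega>\<close> finite_subset by blast
  have "v \<notin> c"
    using c(5) antisym \<open>u \<noteq> v\<close> by auto
  have below_v: "\<forall>x\<in>insert v c. le x v"
    using c(2,5) refl trans by auto
  then have "is_chain le (insert v c)"
    using c(3) unfolding is_chain_def by blast
  then have "card (insert v c) \<le> len \<Omega> le v"
    unfolding len_def using c(2) below_v v finite_chain_cards[OF \<open>finite \<Omega>\<close>]
    by (intro Max_ge) auto
  then show ?thesis
    using c(1) \<open>finite c\<close> \<open>v \<notin> c\<close> by simp
qed

lemma hierarchical_leveled_poset:
  assumes P: "finite_poset \<Omega> le" and H: "hierarchical \<Omega> le"
  shows "leveled_poset \<Omega> le (len \<Omega> le)"
proof
  show "finite \<Omega>"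
    using P by (simp add: finite_poset_def)
  fix u v assume u: "u \<in> \<Omega>" and v: "v \<in> \<Omega>"
  show "le u v \<longleftrightarrow> u = v \<or> len \<Omega> le u < len \<Omega> le v"
  proof
    assume "le u v"
    then show "u = v \<or> len \<Omega> le u < len \<Omega> le v"
      using len_strict_mono[OF P u v] by blast
  next
    have "le u u"
      using P u by (simp add: finite_poset_def)
    moreover have "len \<Omega> le u < len \<Omega> le v \<Longrightarrow> le u v"
      using H u v by (simp add: hierarchical_def)
    moreover assume "u = v \<or> len \<Omega> le u < len \<Omega> le v"
    ultimately show "le u v"
      by blast
  qed
qed

theorem proposition3p4:
  fixes \<Omega> :: "'a set" and le :: "'a \<Rightarrow> 'a \<Rightarrow> bool"
    and \<tau> \<eta> :: "'a \<Rightarrow> 'k::field" and C D :: "'a set"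
  assumes "finite_poset \<Omega> le"
    and "hierarchical \<Omega> le"
    and "\<forall>i\<in>\<Omega>. \<tau> i \<noteq> 0"
    and "\<forall>i\<in>\<Omega>. \<eta> i \<noteq> -1"
    and "D \<in> dual_ideals \<Omega> le" and "C \<in> dual_ideals \<Omega> le"
  shows "piP le \<tau> \<eta> \<Omega> C = piP le \<tau> \<eta> \<Omega> D \<longleftrightarrow>
         (\<exists>\<epsilon>. bij_betw \<epsilon> C D \<and> (\<forall>i\<in>C. \<eta> i = \<eta> (\<epsilon> i)))"
proof -
  interpret leveled_poset \<Omega> le "len \<Omega> le"
    using assms(1,2) by (rule hierarchical_leveled_poset)
  have "finite C" "finite D"
    using assms(5,6) finite_carrier by (auto simp: dual_ideals_def intro: finite_subset)
  have "piP le \<tau> \<eta> \<Omega> C = piP le \<tau> \<eta> \<Omega> D \<longleftrightarrow> image_mset \<eta> (mset_set C) = image_mset \<eta> (mset_set D)"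
    by (rule piP_eq_iff_image_mset_eq[OF assms(3,4,6,5)])
  also have "\<dots> \<longleftrightarrow> (\<exists>\<epsilon>. bij_betw \<epsilon> C D \<and> (\<forall>i\<in>C. \<eta> i = \<eta> (\<epsilon> i)))"
    by (rule image_mset_mset_set_eq_iff_bij_betw[OF \<open>finite C\<close> \<open>finite D\<close>])
  finally show ?thesis .
qed

end
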